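(* For $n\ge2$ agents with identical additive valuations, every online algorithm that in each round $t$ outputs a contiguous EF1 allocation of $M_t$ requires $\Omega(nT)$ adjustments in the worst case (for $T$ sufficiently large compared with $n$).
   Context: Items $g_1,\dots,g_T$ arrive online on a line; $M_t=\{g_1,\dots,g_t\}$. A contiguous allocation of $M_t$ assigns agent $i$ the $i$-th block from the left. EF1: for all $i,j$, $A_j=\emptyset$ or some $g\in A_j$ has $v(A_i)\ge v(A_j\setminus\{g\})$. The number of adjustments is $\sum_{t=1}^{T-1}|\{g\in M_t: g \text{ is assigned to different agents in } A^t \text{ and } A^{t+1}\}|$. *)

theory Defs
  imports Complex_Main
begin

(* Items are indexed 0,1,2,...; an instance is the list of (common, additive) item values.
   An allocation of the first t items to n agents (agents 0..n-1) is a map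
   item index -> agent. *)

definition bundle_of :: "nat \<Rightarrow> (nat \<Rightarrow> nat) \<Rightarrow> nat \<Rightarrow> nat set" where
  "bundle_of t a i = {g. g < t \<and> a g = i}"

definition val :: "real list \<Rightarrow> nat set \<Rightarrow> real" where
  "val xs S = (\<Sum>g\<in>S. xs ! g)"

(* contiguous: agent i receives the i-th block from the left (blocks may be empty) *)
definition contiguous_alloc :: "nat \<Rightarrow> nat \<Rightarrow> (nat \<Rightarrow> nat) \<Rightarrow> bool" where
  "contiguous_alloc n t a \<longleftrightarrow>
     (\<forall>g<t. a g < n) \<and> (\<forall>g g'. g \<le> g' \<and> g' < t \<longrightarrow> a g \<le> a g')"

definition EF1 :: "nat \<Rightarrow> real list \<Rightarrow> (nat \<Rightarrow> nat) \<Rightarrow> bool" where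
  "EF1 n xs a \<longleftrightarrow>
     (\<forall>i<n. \<forall>j<n. bundle_of (length xs) a j = {} \<or>
        (\<exists>g\<in>bundle_of (length xs) a j.
            val xs (bundle_of (length xs) a i) \<ge> val xs (bundle_of (length xs) a j - {g})))"

(* An online algorithm: the allocation output in round t depends only on the values
   of the items g_1..g_t seen so far, i.e. it is  alg (take t xs). *)
definition valid_online_alg :: "nat \<Rightarrow> (real list \<Rightarrow> nat \<Rightarrow> nat) \<Rightarrow> bool" where
  "valid_online_alg n alg \<longleftrightarrow>
     (\<forall>xs. (\<forall>x\<in>set xs. x \<ge> 0) \<longrightarrow>
        contiguous_alloc n (length xs) (alg xs) \<and> EF1 n xs (alg xs))"

definition adjustments :: "(real list \<Rightarrow> nat \<Rightarrow> nat) \<Rightarrow> real list \<Rightarrow> nat" where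
  "adjustments alg xs =
     (\<Sum>t\<in>{1..<length xs}.
        card {g. g < t \<and> alg (take t xs) g \<noteq> alg (take (Suc t) xs) g})"

end

theory Submission
  imports Defs
begin

text \<open>Feed the algorithm the all-ones instance. With unit values EF1 says that bundle sizes
differ by at most one, so in round \<open>t\<close> the first \<open>k\<close> bundles hold \<open>k t / n \<plusminus> k\<close> items: the
boundary between agents \<open>k-1\<close> and \<open>k\<close> drifts right at speed \<open>k/n\<close>, and every item it
overtakes must change owner. Once \<open>t \<ge> 4n\<^sup>2\<close> these estimates forbid an item from moving by
two agents in one round, so an adjusted item is overtaken by at most one boundary. Hence each
round costs at least the total drift \<open>\<Sum>k<n. k/n = (n-1)/2\<close>, i.e. \<open>\<Omega>(nT)\<close> over \<open>T\<close> rounds.\<close>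

definition prefix_count :: "nat \<Rightarrow> (nat \<Rightarrow> nat) \<Rightarrow> nat \<Rightarrow> nat" where
  "prefix_count t a k = card {g. g < t \<and> a g < k}"

lemma finite_bundle_of [simp]: "finite (bundle_of t a i)"
  by (simp add: bundle_of_def)

lemma val_replicate_one:
  assumes "S \<subseteq> {..<t}"
  shows "val (replicate t 1) S = real (card S)"
proof -
  have "(\<Sum>g\<in>S. replicate t (1::real) ! g) = (\<Sum>g\<in>S. 1)"
    by (rule sum.cong) (use assms in auto)
  then show ?thesis unfolding val_def by simp
qed

lemma prefix_count_eq_sum_bundles:
  "prefix_count t a k = (\<Sum>i<k. card (bundle_of t a i))"
proof (induction k)
  case (Suc k)
  have "{g. g < t \<and> a g < Suc k} = {g. g < t \<and> a g < k} \<union> bundle_of t a k"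
    and "{g. g < t \<and> a g < k} \<inter> bundle_of t a k = {}"
    by (auto simp: bundle_of_def)
  with Suc show ?case by (simp add: prefix_count_def card_Un_disjoint)
qed (simp add: prefix_count_def)

lemma prefix_count_total:
  assumes "\<forall>g<t. a g < n"
  shows "prefix_count t a n = t"
proof -
  have "{g. g < t \<and> a g < n} = {..<t}" using assms by auto
  then show ?thesis by (simp add: prefix_count_def)
qed

lemma EF1_unit_card_le:
  assumes "EF1 n (replicate t 1) a" "i < n" "j < n"
  shows "card (bundle_of t a j) \<le> card (bundle_of t a i) + 1"
proof (cases "bundle_of t a j = {}")
  case False
  with assms obtain g where g: "g \<in> bundle_of t a j"
    and v: "val (replicate t 1) (bundle_of t a j - {g}) \<le> val (replicate t 1) (bundle_of t a i)"
    unfolding EF1_def by auto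
  have "bundle_of t a i \<subseteq> {..<t}" "bundle_of t a j - {g} \<subseteq> {..<t}"
    by (auto simp: bundle_of_def)
  with v have "card (bundle_of t a j - {g}) \<le> card (bundle_of t a i)"
    by (simp add: val_replicate_one)
  with g show ?thesis by simp
qed simp

lemma EF1_unit_bundle_bounds:
  assumes "EF1 n (replicate t 1) a" "\<forall>g<t. a g < n" "j < n"
  shows "n * card (bundle_of t a j) \<le> t + n" and "t \<le> n * card (bundle_of t a j) + n"
proof -
  have total: "(\<Sum>i<n. card (bundle_of t a i)) = t"
    using prefix_count_total[OF assms(2)] by (simp add: prefix_count_eq_sum_bundles)
  have "n * card (bundle_of t a j) = (\<Sum>i<n. card (bundle_of t a j))" by simp
  also have "\<dots> \<le> (\<Sum>i<n. card (bundle_of t a i) + 1)"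
    by (rule sum_mono) (use EF1_unit_card_le[OF assms(1) _ assms(3)] in auto)
  also have "\<dots> = t + n" using total by (simp add: sum_Suc)
  finally show "n * card (bundle_of t a j) \<le> t + n" .
  have "t = (\<Sum>i<n. card (bundle_of t a i))" using total by simp
  also have "\<dots> \<le> (\<Sum>i<n. card (bundle_of t a j) + 1)"
    by (rule sum_mono) (use EF1_unit_card_le[OF assms(1) assms(3)] in auto)
  finally show "t \<le> n * card (bundle_of t a j) + n" by simp
qed

lemma EF1_unit_prefix_bounds:
  assumes "EF1 n (replicate t 1) a" "\<forall>g<t. a g < n" "k \<le> n"
  shows "n * prefix_count t a k \<le> k * (t + n)"
    and "k * t \<le> n * prefix_count t a k + k * n"
proof -
  have "n * prefix_count t a k = (\<Sum>i<k. n * card (bundle_of t a i))"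
    by (simp add: prefix_count_eq_sum_bundles sum_distrib_left)
  also have "\<dots> \<le> (\<Sum>i<k. t + n)"
    by (rule sum_mono) (use EF1_unit_bundle_bounds[OF assms(1,2)] assms(3) in auto)
  finally show "n * prefix_count t a k \<le> k * (t + n)" by simp
  have "k * t = (\<Sum>i<k. t)" by simp
  also have "\<dots> \<le> (\<Sum>i<k. n * card (bundle_of t a i) + n)"
    by (rule sum_mono) (use EF1_unit_bundle_bounds[OF assms(1,2)] assms(3) in auto)
  also have "\<dots> = n * prefix_count t a k + k * n"
    by (simp add: prefix_count_eq_sum_bundles sum_distrib_left sum.distrib)
  finally show "k * t \<le> n * prefix_count t a k + k * n" .
qed

text \<open>If item \<open>g\<close> lies left of boundary \<open>k\<close> under \<open>a\<close> but right of boundary \<open>k'\<close> under \<open>a'\<close>,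
then everything left of \<open>k'\<close> under \<open>a'\<close> precedes \<open>g\<close>, hence lies left of \<open>k\<close> under \<open>a\<close>.\<close>

lemma prefix_count_le_if_crossing:
  assumes "contiguous_alloc n t a" "contiguous_alloc n t' a'"
    and "g < t" "g < t'" "a g < k" "k' \<le> a' g"
  shows "prefix_count t' a' k' \<le> prefix_count t a k"
proof -
  have "{h. h < t' \<and> a' h < k'} \<subseteq> {h. h < t \<and> a h < k}"
  proof safe
    fix h assume h: "h < t'" "a' h < k'"
    have "h < g"
    proof (rule ccontr)
      assume "\<not> h < g"
      then have "a' g \<le> a' h" using assms(2) h(1) by (simp add: contiguous_alloc_def)
      with assms(6) h(2) show False by simp
    qed
    moreover have "a h \<le> a g" using assms(1,3) \<open>h < g\<close> by (simp add: contiguous_alloc_def)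
    ultimately show "h < t" "a h < k" using assms(3,5) by simp_all
  qed
  then show ?thesis unfolding prefix_count_def by (rule card_mono[rotated]) simp
qed

lemma valid_online_alg_unit:
  assumes "valid_online_alg n alg"
  shows "contiguous_alloc n t (alg (replicate t 1))" "EF1 n (replicate t 1) (alg (replicate t 1))"
proof -
  have "\<forall>x\<in>set (replicate t (1::real)). 0 \<le> x" by simp
  with assms have "contiguous_alloc n (length (replicate t (1::real))) (alg (replicate t 1)) \<and>
      EF1 n (replicate t 1) (alg (replicate t 1))"
    unfolding valid_online_alg_def by blast
  then show "contiguous_alloc n t (alg (replicate t 1))" "EF1 n (replicate t 1) (alg (replicate t 1))"
    by (simp_all only: length_replicate)
qed

lemma online_unit_prefix_bounds:
  assumes "valid_online_alg n alg" "k \<le> n"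
  shows "n * prefix_count t (alg (replicate t 1)) k \<le> k * (t + n)"
    and "k * t \<le> n * prefix_count t (alg (replicate t 1)) k + k * n"
proof -
  have "\<forall>g<t. alg (replicate t 1) g < n"
    using valid_online_alg_unit(1)[OF assms(1)] by (simp add: contiguous_alloc_def)
  note bounds = EF1_unit_prefix_bounds[OF valid_online_alg_unit(2)[OF assms(1)] this assms(2)]
  show "n * prefix_count t (alg (replicate t 1)) k \<le> k * (t + n)" by (rule bounds(1))
  show "k * t \<le> n * prefix_count t (alg (replicate t 1)) k + k * n" by (rule bounds(2))
qed

lemma online_unit_agent_increase_le_one:
  assumes v: "valid_online_alg n alg" and s': "4 * n * n \<le> s'" and s: "s \<le> Suc s'"
    and g: "g < s" "g < s'"
  shows "alg (replicate s' 1) g \<le> alg (replicate s 1) g + 1"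
proof (rule ccontr)
  define a where "a = alg (replicate s 1)"
  define a' where "a' = alg (replicate s' 1)"
  define i where "i = a g"
  assume "\<not> alg (replicate s' 1) g \<le> alg (replicate s 1) g + 1"
  then have jump: "i + 2 \<le> a' g" by (simp add: i_def a_def a'_def)
  have c: "contiguous_alloc n s a" "contiguous_alloc n s' a'"
    unfolding a_def a'_def by (rule valid_online_alg_unit[OF v])+
  have "a' g < n" using c(2) g(2) by (simp add: contiguous_alloc_def)
  with jump have n: "i + 2 \<le> n" by simp
  have "prefix_count s' a' (i + 2) \<le> prefix_count s a (i + 1)"
    by (rule prefix_count_le_if_crossing[OF c g]) (use jump in \<open>simp_all add: i_def\<close>)
  then have "n * prefix_count s' a' (i + 2) \<le> n * prefix_count s a (i + 1)" by simp
  moreover have "(i + 1) * s \<le> (i + 1) * Suc s'" using s by (rule mult_le_mono2)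
  ultimately have "(i + 2) * s' \<le> (i + 1) * (Suc s' + n) + (i + 2) * n"
    using online_unit_prefix_bounds(2)[OF v n, of s', folded a'_def]
      online_unit_prefix_bounds(1)[OF v, of "i + 1" s, folded a_def] n
    by (simp only: distrib_left) linarith
  then have "s' \<le> i + 1 + (2 * i + 3) * n" by (simp add: algebra_simps)
  also have "\<dots> < 4 * n * n"
  proof -
    have "(2 * i + 3) * n \<le> (2 * n) * n" by (rule mult_right_mono) (use n in simp_all)
    moreover have "i + 1 < n * n" using n le_square[of n] by linarith
    moreover have "(2 * n) * n = 2 * (n * n)" "4 * n * n = 4 * (n * n)" by simp_all
    ultimately show ?thesis by linarith
  qed
  finally show False using s' by simp
qed

lemma online_unit_move_le_one:
  assumes "valid_online_alg n alg" "4 * n * n \<le> t" "g < t"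
  shows "alg (replicate (Suc t) 1) g \<le> alg (replicate t 1) g + 1"
    and "alg (replicate t 1) g \<le> alg (replicate (Suc t) 1) g + 1"
proof -
  show "alg (replicate (Suc t) 1) g \<le> alg (replicate t 1) g + 1"
    by (rule online_unit_agent_increase_le_one[OF assms(1), where s = t]) (use assms in simp_all)
  show "alg (replicate t 1) g \<le> alg (replicate (Suc t) 1) g + 1"
    by (rule online_unit_agent_increase_le_one[OF assms(1), where s = "Suc t"]) (use assms in simp_all)
qed

lemma online_unit_last_item:
  assumes v: "valid_online_alg n alg" and "1 \<le> n" "n \<le> t"
  shows "n - 1 \<le> alg (replicate (Suc t) 1) t"
proof -
  define a where "a = alg (replicate (Suc t) 1)"
  have c: "contiguous_alloc n (Suc t) a" and ef1: "EF1 n (replicate (Suc t) 1) a"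
    unfolding a_def by (rule valid_online_alg_unit[OF v])+
  have "\<forall>g<Suc t. a g < n" using c by (simp add: contiguous_alloc_def)
  then have "Suc t \<le> n * card (bundle_of (Suc t) a (n - 1)) + n"
    using EF1_unit_bundle_bounds(2)[OF ef1] assms(2) by simp
  then have "bundle_of (Suc t) a (n - 1) \<noteq> {}" using assms(3) by auto
  then obtain h where h: "h < Suc t" "a h = n - 1" by (auto simp: bundle_of_def)
  then have "a h \<le> a t" using c by (meson contiguous_alloc_def less_Suc_eq_le lessI)
  with h show ?thesis by (simp add: a_def)
qed

text \<open>When no item moves by more than one agent, an item that changes sides of a threshold
\<open>k\<close> changes sides of no other threshold.\<close>

lemma sum_card_threshold_crossings_le:
  fixes a a' :: "nat \<Rightarrow> nat" and K :: "nat set"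
  assumes "finite K" and step: "\<And>g. g < t \<Longrightarrow> a' g \<le> a g + 1 \<and> a g \<le> a' g + 1"
  shows "(\<Sum>k\<in>K. card {g. g < t \<and> (a g < k) \<noteq> (a' g < k)}) \<le> card {g. g < t \<and> a g \<noteq> a' g}"
proof -
  define D where "D k = {g. g < t \<and> (a g < k) \<noteq> (a' g < k)}" for k
  have "\<forall>k\<in>K. \<forall>k'\<in>K. k \<noteq> k' \<longrightarrow> D k \<inter> D k' = {}"
  proof (intro ballI impI)
    fix k k' :: nat assume "k \<noteq> k'"
    show "D k \<inter> D k' = {}"
    proof (rule ccontr)
      assume "D k \<inter> D k' \<noteq> {}"
      then obtain g where "g \<in> D k" "g \<in> D k'" by blast
      with step[of g] \<open>k \<noteq> k'\<close> show False unfolding D_def by auto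
    qed
  qed
  moreover have "\<forall>k\<in>K. finite (D k)" by (simp add: D_def)
  ultimately have "(\<Sum>k\<in>K. card (D k)) = card (\<Union>k\<in>K. D k)"
    using card_UN_disjoint[OF assms(1), of D] by simp
  also have "\<dots> \<le> card {g. g < t \<and> a g \<noteq> a' g}"
    by (rule card_mono) (auto simp: D_def)
  finally show ?thesis by (simp add: D_def)
qed

lemma online_unit_round_prefix_gain:
  assumes v: "valid_online_alg n alg" and n: "1 \<le> n" and t: "4 * n * n \<le> t"
  defines "a \<equiv> alg (replicate t 1)" and "a' \<equiv> alg (replicate (Suc t) 1)"
  shows "(\<Sum>k\<in>{1..<n}. real (prefix_count (Suc t) a' k) - real (prefix_count t a k))
    \<le> real (card {g. g < t \<and> a g \<noteq> a' g})"
proof -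
  define D where "D k = {g. g < t \<and> (a g < k) \<noteq> (a' g < k)}" for k
  have "n \<le> t" using t le_square[of n] by linarith
  then have last: "n - 1 \<le> a' t" unfolding a'_def by (rule online_unit_last_item[OF v n])
  have gain: "real (prefix_count (Suc t) a' k) - real (prefix_count t a k) \<le> real (card (D k))"
    if k: "k \<in> {1..<n}" for k
  proof -
    have "{g. g < Suc t \<and> a' g < k} \<subseteq> D k \<union> {g. g < t \<and> a g < k}"
      using last k by (auto simp: D_def less_Suc_eq)
    then have "prefix_count (Suc t) a' k \<le> card (D k \<union> {g. g < t \<and> a g < k})"
      unfolding prefix_count_def by (rule card_mono[rotated]) (simp add: D_def)
    also have "\<dots> \<le> card (D k) + prefix_count t a k"
      unfolding prefix_count_def by (rule card_Un_le)
    finally show ?thesis by linarith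
  qed
  have "(\<Sum>k\<in>{1..<n}. real (prefix_count (Suc t) a' k) - real (prefix_count t a k))
      \<le> (\<Sum>k\<in>{1..<n}. real (card (D k)))"
    by (rule sum_mono) (rule gain)
  also have "\<dots> \<le> real (card {g. g < t \<and> a g \<noteq> a' g})"
    using sum_card_threshold_crossings_le[of "{1..<n}" t a' a]
      online_unit_move_le_one[OF v t, folded a_def a'_def]
    unfolding D_def of_nat_sum[symmetric] of_nat_le_iff by simp
  finally show ?thesis .
qed

lemma adjustments_replicate:
  "adjustments alg (replicate T x) = (\<Sum>t\<in>{1..<T}.
     card {g. g < t \<and> alg (replicate t x) g \<noteq> alg (replicate (Suc t) x) g})"
  unfolding adjustments_def by (rule sum.cong) (auto simp: min_def)

lemma online_unit_prefix_gain_le_adjustments: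
  assumes v: "valid_online_alg n alg" and n: "1 \<le> n" and t0: "4 * n * n \<le> t0" "t0 \<le> T"
  shows "(\<Sum>k\<in>{1..<n}. real (prefix_count T (alg (replicate T 1)) k)
      - real (prefix_count t0 (alg (replicate t0 1)) k)) \<le> real (adjustments alg (replicate T 1))"
proof -
  define P where "P t k = real (prefix_count t (alg (replicate t 1)) k)" for t k
  define C where "C t = card {g. g < t \<and> alg (replicate t 1) g \<noteq> alg (replicate (Suc t) 1) g}" for t
  have "(\<Sum>k\<in>{1..<n}. P T k - P t0 k) = (\<Sum>k\<in>{1..<n}. \<Sum>t\<in>{t0..<T}. P (Suc t) k - P t k)"
    using sum_Suc_diff'[OF t0(2), of "\<lambda>t. P t k" for k] by simp
  also have "\<dots> = (\<Sum>t\<in>{t0..<T}. \<Sum>k\<in>{1..<n}. P (Suc t) k - P t k)"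
    by (rule sum.swap)
  also have "\<dots> \<le> (\<Sum>t\<in>{t0..<T}. real (C t))"
    by (rule sum_mono) (use online_unit_round_prefix_gain[OF v n] t0 in \<open>simp add: P_def C_def\<close>)
  also have "\<dots> \<le> (\<Sum>t\<in>{1..<T}. real (C t))"
  proof (rule sum_mono2)
    have "1 \<le> t0" using n t0(1) le_square[of n] by linarith
    then show "{t0..<T} \<subseteq> {1..<T}" by auto
  qed simp_all
  also have "\<dots> = real (adjustments alg (replicate T 1))"
    by (simp add: adjustments_replicate C_def)
  finally show ?thesis by (simp add: P_def)
qed

lemma double_sum_atLeast1_lessThan:
  "2 * (\<Sum>k\<in>{1..<n}. real k) = real n * (real n - 1)"
  by (induction n) (simp_all add: sum.op_ivl_Suc algebra_simps)

lemma online_unit_prefix_count_growth: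
  assumes v: "valid_online_alg n alg" and k: "k \<le> n"
  shows "real k * (real T - real t0 - 2 * real n) \<le> real n *
    (real (prefix_count T (alg (replicate T 1)) k) - real (prefix_count t0 (alg (replicate t0 1)) k))"
proof -
  have "real k * real T \<le> real n * real (prefix_count T (alg (replicate T 1)) k) + real k * real n"
    using online_unit_prefix_bounds(2)[OF v k, of T] by (metis of_nat_add of_nat_le_iff of_nat_mult)
  moreover have "real n * real (prefix_count t0 (alg (replicate t0 1)) k) \<le> real k * (real t0 + real n)"
    using online_unit_prefix_bounds(1)[OF v k, of t0] by (metis of_nat_add of_nat_le_iff of_nat_mult)
  ultimately show ?thesis by (simp add: algebra_simps)
qed

lemma online_unit_adjustments_lower_bound:
  assumes v: "valid_online_alg n alg" and n: "2 \<le> n" and T: "8 * n * n + 4 * n \<le> T"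
  shows "real n * real T / 8 \<le> real (adjustments alg (replicate T 1))"
proof -
  define t0 where "t0 = 4 * n * n"
  define P where "P t k = real (prefix_count t (alg (replicate t 1)) k)" for t k
  define X where "X = real T - real t0 - 2 * real n"
  have gain: "real k * X \<le> real n * (P T k - P t0 k)" if "k \<in> {1..<n}" for k
    using online_unit_prefix_count_growth[OF v, of k] that by (simp add: P_def X_def)
  have "real n * (X * (real n - 1)) = X * (2 * (\<Sum>k\<in>{1..<n}. real k))"
    unfolding double_sum_atLeast1_lessThan by (simp add: algebra_simps)
  also have "\<dots> = 2 * (\<Sum>k\<in>{1..<n}. real k * X)"
    by (simp add: sum_distrib_left algebra_simps)
  also have "\<dots> \<le> 2 * (\<Sum>k\<in>{1..<n}. real n * (P T k - P t0 k))"
    using sum_mono[of "{1..<n}", OF gain] by simp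
  also have "\<dots> = real n * (2 * (\<Sum>k\<in>{1..<n}. P T k - P t0 k))"
    by (simp add: sum_distrib_left mult.left_commute)
  also have "\<dots> \<le> real n * (2 * real (adjustments alg (replicate T 1)))"
    using online_unit_prefix_gain_le_adjustments[OF v _ _, of t0 T] n T
    by (simp add: P_def t0_def)
  finally have "X * (real n - 1) \<le> 2 * real (adjustments alg (replicate T 1))"
    using n by simp
  moreover have "real T / 2 * (real n / 2) \<le> X * (real n - 1)"
  proof -
    have "real (8 * n * n + 4 * n) \<le> real T" using T by (simp only: of_nat_le_iff)
    then have "real T / 2 \<le> X" by (simp add: X_def t0_def)
    moreover have "real n / 2 \<le> real n - 1" using n by simp
    ultimately show ?thesis by (intro mult_mono) simp_all
  qed
  ultimately show ?thesis by (simp add: mult.commute)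
qed

theorem mainTheorem10:
  "\<exists>c::real. c > 0 \<and>
     (\<forall>n::nat. n \<ge> 2 \<longrightarrow>
       (\<exists>T0::nat. \<forall>T\<ge>T0. \<forall>alg. valid_online_alg n alg \<longrightarrow>
          (\<exists>xs::real list. length xs = T \<and> (\<forall>x\<in>set xs. x \<ge> 0) \<and>
             real (adjustments alg xs) \<ge> c * real n * real T)))"
proof (intro exI[of _ "1/8"] conjI allI impI)
  fix n :: nat assume "n \<ge> 2"
  show "\<exists>T0. \<forall>T\<ge>T0. \<forall>alg. valid_online_alg n alg \<longrightarrow>
          (\<exists>xs::real list. length xs = T \<and> (\<forall>x\<in>set xs. x \<ge> 0) \<and>
             real (adjustments alg xs) \<ge> 1/8 * real n * real T)"
  proof (intro exI[of _ "8 * n * n + 4 * n"] allI impI)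
    fix T alg assume "8 * n * n + 4 * n \<le> T" "valid_online_alg n alg"
    with \<open>n \<ge> 2\<close> have "1/8 * real n * real T \<le> real (adjustments alg (replicate T 1))"
      using online_unit_adjustments_lower_bound by simp
    then show "\<exists>xs::real list. length xs = T \<and> (\<forall>x\<in>set xs. x \<ge> 0) \<and>
             real (adjustments alg xs) \<ge> 1/8 * real n * real T"
      by (intro exI[of _ "replicate T 1"]) simp
  qed
qed simp

end
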